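(* Let $S=\{a_i \bmod d_i : 1\le i\le r\}$ be an exact covering system and $G_S$ its exact covering system digraph. If a vertex $n$ of $G_S$ is an ancestor of a cyclic vertex, then $n$ is itself a cyclic vertex.
   Context: A system of congruences $S=\{a_i \bmod d_i : 1\le i\le r\}$ with integers $a_i$ and nonzero integers $d_i$ (negative $d_i$ allowed; $n\equiv a \bmod -d$ means $n\equiv a\bmod d$) is an exact covering system if every integer satisfies exactly one of the congruences; congruences are distinguished by their chosen representatives $a_i$. The exact covering system digraph $G_S$ has vertex set $\mathbb{Z}$ and edges $(n,d_in+a_i)$ for all $n\in\mathbb{Z}$, $1\le i\le r$. Every vertex has indegree one; the predecessor $P(n)$ is the unique integer with $(P(n),n)$ an edge, and $m$ is an ancestor of $n$ if $m=P^k(n)$ for some $k\in\mathbb{N}$. A cyclic vertex is a vertex lying on a directed cycle of $G_S$ (loops included). *)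

theory Defs
  imports Main
begin

text \<open>A system of congruences is a list of pairs (a_i, d_i); index i < length S.
  n satisfies congruence i iff d_i divides n - a_i (so negative moduli behave as |d_i|).\<close>

definition exact_covering_system :: "(int \<times> int) list \<Rightarrow> bool" where
  "exact_covering_system S \<longleftrightarrow>
     (\<forall>i<length S. snd (S ! i) \<noteq> 0) \<and>
     (\<forall>n::int. \<exists>!i. i < length S \<and> snd (S ! i) dvd (n - fst (S ! i)))"

definition ecs_edge :: "(int \<times> int) list \<Rightarrow> int \<Rightarrow> int \<Rightarrow> bool" where
  "ecs_edge S n m \<longleftrightarrow> (\<exists>i<length S. m = snd (S ! i) * n + fst (S ! i))"

definition ecs_pred :: "(int \<times> int) list \<Rightarrow> int \<Rightarrow> int" where
  "ecs_pred S m = (THE n. ecs_edge S n m)"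

definition ecs_ancestor :: "(int \<times> int) list \<Rightarrow> int \<Rightarrow> int \<Rightarrow> bool" where
  "ecs_ancestor S m n \<longleftrightarrow> (\<exists>k::nat. m = (ecs_pred S ^^ k) n)"

definition ecs_cyclic :: "(int \<times> int) list \<Rightarrow> int \<Rightarrow> bool" where
  "ecs_cyclic S v \<longleftrightarrow> (ecs_edge S)\<^sup>+\<^sup>+ v v"

end

theory Submission
  imports Defs
begin

text \<open>Every vertex of \<open>G\<^sub>S\<close> has exactly one incoming edge, so the predecessor of a vertex on a
  cycle is its predecessor along that cycle and hence again cyclic; iterating gives the claim.\<close>

lemma tranclp_cycle_predecessor:
  assumes "r\<^sup>+\<^sup>+ v v"
  obtains u where "r u v" and "r\<^sup>+\<^sup>+ u u"
  using assms
proof (cases rule: tranclp.cases)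
  case r_into_trancl
  then show ?thesis using that by blast
next
  case (trancl_into_trancl u)
  then show ?thesis using that by (meson tranclp_into_tranclp2)
qed

lemma ecs_edge_source_unique:
  assumes S: "exact_covering_system S" and "ecs_edge S n m" and "ecs_edge S n' m"
  shows "n = n'"
proof -
  obtain i where i: "i < length S" "m = snd (S ! i) * n + fst (S ! i)"
    using assms(2) unfolding ecs_edge_def by blast
  obtain j where j: "j < length S" "m = snd (S ! j) * n' + fst (S ! j)"
    using assms(3) unfolding ecs_edge_def by blast
  have "\<exists>!i. i < length S \<and> snd (S ! i) dvd (m - fst (S ! i))"
    using S unfolding exact_covering_system_def by blast
  moreover have "snd (S ! i) dvd (m - fst (S ! i))" using i by simp
  moreover have "snd (S ! j) dvd (m - fst (S ! j))" using j by simp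
  ultimately have "i = j" using i(1) j(1) by blast
  moreover have "snd (S ! i) \<noteq> 0"
    using S i(1) unfolding exact_covering_system_def by blast
  ultimately show ?thesis using i j by simp
qed

lemma ecs_pred_eqI:
  assumes "exact_covering_system S" and "ecs_edge S n m"
  shows "ecs_pred S m = n"
  unfolding ecs_pred_def
  using assms ecs_edge_source_unique by (metis the_equality)

lemma ecs_cyclic_pred:
  assumes S: "exact_covering_system S" and "ecs_cyclic S v"
  shows "ecs_cyclic S (ecs_pred S v)"
proof -
  obtain u where "ecs_edge S u v" and "(ecs_edge S)\<^sup>+\<^sup>+ u u"
    using assms(2) unfolding ecs_cyclic_def by (rule tranclp_cycle_predecessor)
  then show ?thesis
    unfolding ecs_cyclic_def by (simp add: ecs_pred_eqI[OF S])
qed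

lemma ecs_cyclic_funpow_pred:
  assumes "exact_covering_system S" and "ecs_cyclic S v"
  shows "ecs_cyclic S ((ecs_pred S ^^ k) v)"
  by (induction k) (simp_all add: assms ecs_cyclic_pred)

theorem mainTheorem6:
  fixes S :: "(int \<times> int) list" and n c :: int
  assumes "exact_covering_system S"
    and "ecs_cyclic S c"
    and "ecs_ancestor S n c"
  shows "ecs_cyclic S n"
  using assms ecs_cyclic_funpow_pred unfolding ecs_ancestor_def by blast

end
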